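(* Let $a \in \mathbb{R}$ and $w \in \mathbb{C}$. Then: (I) $T(a,w) = (0,\infty)$ if and only if $a \ge |w|$ and $a > \operatorname{Re}(w)$. (II) $T(a,w)$ is a nonempty proper subset of $(0,\infty)$ if and only if $w \neq 0$ and $\operatorname{Re}(w) < a < |w|$. In this case $T(a,w) = (0, \tau_c(a,w))$, where $$\tau_c(a,w) = \frac{1}{\sqrt{|w|^2-a^2}}\left[|\operatorname{Arg}(w)| - \arccos\left(\frac{a}{|w|}\right)\right] = \frac{1}{\sqrt{|w|^2-a^2}}\left[|\operatorname{Arg}(w)| - \operatorname{arccot}\left(\frac{a}{\sqrt{|w|^2-a^2}}\right)\right] > 0.$$ (III) $T(a,w) = \emptyset$ if and only if $a \le \operatorname{Re}(w)$.
   Context: For $a, w \in \mathbb{C}$, $T(a,w)$ denotes the set of all $\tau > 0$ such that every root $z \in \mathbb{C}$ of $z + a - w e^{-\tau z} = 0$ has negative real part. $\operatorname{Arg}(w) \in (-\pi,\pi]$ is the principal argument of $w \neq 0$; $\arccos : [-1,1] \to [0,\pi]$ is the inverse of $\cos|_{[0,\pi]}$; $\operatorname{arccot}: \mathbb{R} \to (0,\pi)$ is the inverse of $\cot|_{(0,\pi)}$. *)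

theory Defs
  imports "HOL-Analysis.Analysis"
begin

definition stab_delays :: "complex \<Rightarrow> complex \<Rightarrow> real set" where
  "stab_delays a w = {\<tau>. \<tau> > 0 \<and>
     (\<forall>z::complex. z + a - w * exp (- (complex_of_real \<tau>) * z) = 0 \<longrightarrow> Re z < 0)}"

definition arccot :: "real \<Rightarrow> real" where
  "arccot x = (THE y. 0 < y \<and> y < pi \<and> cot y = x)"

end

theory Submission
  imports Defs
begin

text \<open>Write \<open>w = r cis \<phi>\<close> and \<open>\<rho>(x) = r exp(-\<tau> x)\<close>. A root \<open>z = x + i y\<close>, \<open>y \<ge> 0\<close>, of
  \<open>z + a = w exp(-\<tau> z)\<close> satisfies \<open>z + a = \<rho>(x) cis (\<phi> - \<tau> y)\<close>; eliminating \<open>y\<close> shows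
  that \<open>F(x) = arccos((x + a)/\<rho>) + \<tau> sqrt(\<rho>\<^sup>2 - (x + a)\<^sup>2)\<close> is congruent to \<open>\<phi>\<close> mod \<open>2\<pi>\<close>.
  The derivative of \<open>F\<close> is \<open>-((1 + \<tau>(x + a))\<^sup>2 + \<tau>\<^sup>2(\<rho>\<^sup>2 - (x + a)\<^sup>2)) / sqrt(\<rho>\<^sup>2 - (x + a)\<^sup>2)\<close>,
  so \<open>F(x) \<le> F(0) = arccos(a/r) + \<tau> sqrt(r\<^sup>2 - a\<^sup>2)\<close> at every root with \<open>x \<ge> 0\<close>, while by
  continuity \<open>F\<close> takes every value between \<open>F(0)\<close> and \<open>0\<close> on \<open>[0, \<infinity>)\<close>. Hence there is
  a root with \<open>Re z \<ge> 0\<close> exactly when \<open>\<bar>Arg w\<bar> \<le> F(0)\<close>. For \<open>a \<le> Re w\<close> this holds for every delay, since then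
  \<open>\<bar>Arg w\<bar> \<le> arccos(a/r)\<close>; for \<open>Re w < a < r\<close> it fails exactly when \<open>\<tau> < \<tau>\<^sub>c\<close>; and for
  \<open>a \<ge> r\<close>, \<open>w \<noteq> a\<close> a modulus estimate excludes such roots altogether.\<close>

text \<open>The phase \<open>F\<close>, with the arguments of arccos and sqrt clamped so that it is
  continuous everywhere; where \<open>x + a \<le> -\<rho>(x)\<close> it equals \<open>\<pi>\<close>.\<close>
definition delay_phase :: "real \<Rightarrow> real \<Rightarrow> real \<Rightarrow> real \<Rightarrow> real" where
  "delay_phase r a \<tau> x =
     arccos (max (-1) (min 1 ((x + a) / (r * exp (-\<tau>*x)))))
     + \<tau> * sqrt (max 0 ((r * exp (-\<tau>*x))\<^sup>2 - (x + a)\<^sup>2))"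

lemma continuous_on_delay_phase: "r > 0 \<Longrightarrow> continuous_on S (delay_phase r a \<tau>)"
  unfolding delay_phase_def by (intro continuous_intros) auto

lemma delay_phase_0:
  "r > 0 \<Longrightarrow> delay_phase r a \<tau> 0 = arccos (max (-1) (min 1 (a/r))) + \<tau> * sqrt (max 0 (r\<^sup>2 - a\<^sup>2))"
  by (simp add: delay_phase_def)

lemma delay_phase_eq:
  assumes r: "r > 0" and le: "\<bar>x + a\<bar> \<le> r * exp (-\<tau>*x)"
  shows "delay_phase r a \<tau> x =
    arccos ((x + a) / (r * exp (-\<tau>*x))) + \<tau> * sqrt ((r * exp (-\<tau>*x))\<^sup>2 - (x + a)\<^sup>2)"
proof -
  have pos: "r * exp (-\<tau>*x) > 0" using r by simp
  have "-1 \<le> (x + a) / (r * exp (-\<tau>*x))" "(x + a) / (r * exp (-\<tau>*x)) \<le> 1"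
    using le pos by (auto simp: field_simps abs_le_iff)
  moreover have "(x + a)\<^sup>2 \<le> (r * exp (-\<tau>*x))\<^sup>2"
    using power_mono[OF le abs_ge_zero, of 2] by simp
  ultimately show ?thesis unfolding delay_phase_def by simp
qed

lemma delay_phase_eq_pi:
  assumes r: "r > 0" and le: "x + a \<le> - (r * exp (-\<tau>*x))"
  shows "delay_phase r a \<tau> x = pi"
proof -
  have pos: "r * exp (-\<tau>*x) > 0" using r by simp
  have "(x + a) / (r * exp (-\<tau>*x)) \<le> -1" using le pos by (simp add: field_simps)
  moreover have "r * exp (-\<tau>*x) \<le> \<bar>x + a\<bar>" using le by linarith
  then have "(r * exp (-\<tau>*x))\<^sup>2 \<le> (x + a)\<^sup>2"
    using power_mono[of "r * exp (-\<tau>*x)" "\<bar>x + a\<bar>" 2] pos by simp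
  ultimately show ?thesis unfolding delay_phase_def by simp
qed

lemma unclamped_delay_phase_has_derivative:
  fixes r a \<tau> x :: real
  assumes r: "r > 0" and inside: "\<bar>x + a\<bar> < r * exp (-\<tau>*x)"
  shows "((\<lambda>x. arccos ((x + a) / (r * exp (-\<tau>*x))) + \<tau> * sqrt ((r * exp (-\<tau>*x))\<^sup>2 - (x + a)\<^sup>2))
          has_real_derivative
          - (1 + 2*\<tau>*(x + a) + \<tau>\<^sup>2 * (r * exp (-\<tau>*x))\<^sup>2) / sqrt ((r * exp (-\<tau>*x))\<^sup>2 - (x + a)\<^sup>2))
         (at x)"
proof -
  define \<rho> where "\<rho> = r * exp (-\<tau>*x)"
  define q where "q = x + a"
  have \<rho>: "\<rho> > 0" using r by (simp add: \<rho>_def)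
  have q: "\<bar>q\<bar> < \<rho>" using inside by (simp add: \<rho>_def q_def)
  have u: "-1 < q/\<rho>" "q/\<rho> < 1" using q \<rho> by (auto simp: field_simps abs_less_iff)
  have Y2: "\<rho>\<^sup>2 - q\<^sup>2 > 0"
    using power_strict_mono[OF q abs_ge_zero, of 2] by simp
  define Y where "Y = sqrt (\<rho>\<^sup>2 - q\<^sup>2)"
  have Y: "Y > 0" using Y2 by (simp add: Y_def)
  have sqrt_u: "sqrt (1 - (q/\<rho>)\<^sup>2) = Y / \<rho>"
  proof -
    have "1 - (q/\<rho>)\<^sup>2 = (Y/\<rho>)\<^sup>2" using \<rho> Y2 by (simp add: Y_def field_simps)
    then show ?thesis using Y \<rho> by simp
  qed
  have du: "((\<lambda>x. (x + a) / (r * exp (-\<tau>*x))) has_real_derivative (1 + \<tau>*q) / \<rho>) (at x)"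
    apply (rule derivative_eq_intros refl)+
    using r apply simp
    using r by (simp add: \<rho>_def q_def field_simps)
  have dv: "((\<lambda>x. (r * exp (-\<tau>*x))\<^sup>2 - (x + a)\<^sup>2) has_real_derivative -2*\<tau>*\<rho>\<^sup>2 - 2*q) (at x)"
    apply (rule derivative_eq_intros refl)+
    by (simp add: \<rho>_def q_def field_simps power2_eq_square)
  have d_arccos: "((\<lambda>x. arccos ((x + a) / (r * exp (-\<tau>*x)))) has_real_derivative
      inverse (- sqrt (1 - (q/\<rho>)\<^sup>2)) * ((1 + \<tau>*q) / \<rho>)) (at x)"
    unfolding \<rho>_def q_def
    by (rule DERIV_arccos[THEN DERIV_chain2, OF _ _ du[unfolded \<rho>_def q_def]]) (use u in \<open>simp_all add: \<rho>_def q_def\<close>)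
  have d_sqrt: "((\<lambda>x. sqrt ((r * exp (-\<tau>*x))\<^sup>2 - (x + a)\<^sup>2)) has_real_derivative
      inverse (sqrt (\<rho>\<^sup>2 - q\<^sup>2)) / 2 * (-2*\<tau>*\<rho>\<^sup>2 - 2*q)) (at x)"
    unfolding \<rho>_def q_def
    by (rule DERIV_real_sqrt[THEN DERIV_chain2, OF _ dv[unfolded \<rho>_def q_def]]) (use Y2 in \<open>simp add: \<rho>_def q_def\<close>)
  have "((\<lambda>x. arccos ((x + a) / (r * exp (-\<tau>*x))) + \<tau> * sqrt ((r * exp (-\<tau>*x))\<^sup>2 - (x + a)\<^sup>2))
      has_real_derivative inverse (- sqrt (1 - (q/\<rho>)\<^sup>2)) * ((1 + \<tau>*q) / \<rho>)
      + \<tau> * (inverse (sqrt (\<rho>\<^sup>2 - q\<^sup>2)) / 2 * (-2*\<tau>*\<rho>\<^sup>2 - 2*q))) (at x)"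
    by (intro DERIV_add DERIV_cmult d_arccos d_sqrt)
  moreover have "inverse (- sqrt (1 - (q/\<rho>)\<^sup>2)) * ((1 + \<tau>*q) / \<rho>)
      + \<tau> * (inverse (sqrt (\<rho>\<^sup>2 - q\<^sup>2)) / 2 * (-2*\<tau>*\<rho>\<^sup>2 - 2*q))
     = - (1 + 2*\<tau>*q + \<tau>\<^sup>2*\<rho>\<^sup>2) / Y"
    unfolding sqrt_u Y_def[symmetric] using Y \<rho> by (simp add: field_simps power2_eq_square)
  ultimately show ?thesis by (simp add: \<rho>_def q_def Y_def)
qed

lemma delay_phase_antimono_inside:
  assumes r: "r > 0" and cd: "c \<le> d"
    and inside: "\<And>x. c < x \<Longrightarrow> x < d \<Longrightarrow> \<bar>x + a\<bar> < r * exp (-\<tau>*x)"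
  shows "delay_phase r a \<tau> d \<le> delay_phase r a \<tau> c"
proof (rule DERIV_nonpos_imp_decreasing_open[OF cd])
  show "continuous_on {c..d} (delay_phase r a \<tau>)" using continuous_on_delay_phase r by blast
  fix x assume x: "c < x" "x < d"
  define \<rho> where "\<rho> = r * exp (-\<tau>*x)"
  have sq: "(x + a)\<^sup>2 \<le> \<rho>\<^sup>2"
    using power_mono[OF less_imp_le[OF inside[OF x]] abs_ge_zero, of 2] by (simp add: \<rho>_def)
  have "1 + 2*\<tau>*(x + a) + \<tau>\<^sup>2 * \<rho>\<^sup>2 = (1 + \<tau>*(x + a))\<^sup>2 + \<tau>\<^sup>2 * (\<rho>\<^sup>2 - (x + a)\<^sup>2)"
    by (simp add: power2_eq_square algebra_simps)
  also have "\<dots> \<ge> 0" using sq by simp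
  finally have "- (1 + 2*\<tau>*(x + a) + \<tau>\<^sup>2 * \<rho>\<^sup>2) / sqrt (\<rho>\<^sup>2 - (x + a)\<^sup>2) \<le> 0"
    using sq by (intro divide_nonpos_nonneg) auto
  moreover have "(delay_phase r a \<tau> has_real_derivative
      - (1 + 2*\<tau>*(x + a) + \<tau>\<^sup>2 * \<rho>\<^sup>2) / sqrt (\<rho>\<^sup>2 - (x + a)\<^sup>2)) (at x)"
    unfolding \<rho>_def
  proof (rule has_field_derivative_transform_within_open
              [OF unclamped_delay_phase_has_derivative[OF r inside[OF x]], of "{c<..<d}"])
    fix y assume "y \<in> {c<..<d}"
    then show "arccos ((y + a) / (r * exp (-\<tau>*y))) + \<tau> * sqrt ((r * exp (-\<tau>*y))\<^sup>2 - (y + a)\<^sup>2)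
        = delay_phase r a \<tau> y"
      using delay_phase_eq[OF r] inside by (simp add: less_imp_le)
  qed (use x in simp_all)
  ultimately show "\<exists>y. (delay_phase r a \<tau> has_real_derivative y) (at x) \<and> y \<le> 0" by blast
qed

lemma strict_mono_add_minus_exp:
  fixes r \<tau> a :: real
  assumes "r > 0" "\<tau> > 0"
  shows "strict_mono (\<lambda>x. x + a - r * exp (-\<tau>*x))"
proof (rule strict_monoI)
  fix x y :: real assume "x < y"
  then have "exp (-\<tau>*y) < exp (-\<tau>*x)" using assms by simp
  then have "r * exp (-\<tau>*y) < r * exp (-\<tau>*x)" using assms by simp
  then show "x + a - r * exp (-\<tau>*x) < y + a - r * exp (-\<tau>*y)" using \<open>x < y\<close> by linarith
qed

text \<open>Between the first and last point of \<open>[c, d]\<close> where \<open>x + a \<le> -\<rho>\<close>, the phase is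
  not monotone in general, but it equals \<open>\<pi>\<close> at both of them, its maximal value.\<close>
lemma delay_phase_antimono:
  assumes r: "r > 0" and t: "\<tau> > 0" and cd: "c \<le> d" and end_below: "d + a \<le> r * exp (-\<tau>*d)"
  shows "delay_phase r a \<tau> d \<le> delay_phase r a \<tau> c"
proof -
  have below: "x + a < r * exp (-\<tau>*x)" if "x < d" for x
    using strict_mono_add_minus_exp[OF r t, of a, THEN strict_monoD, OF that] end_below by linarith
  define S where "S = {c..d} \<inter> {x. x + a + r * exp (-\<tau>*x) \<le> 0}"
  have inside: "\<bar>x + a\<bar> < r * exp (-\<tau>*x)" if "c < x" "x < d" "x \<notin> S" for x
    using that below[of x] by (auto simp: S_def)
  show ?thesis
  proof (cases "S = {}")
    case True
    then show ?thesis using inside by (intro delay_phase_antimono_inside[OF r cd]) auto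
  next
    case False
    have "compact S" unfolding S_def
      by (intro compact_Int_closed compact_Icc closed_Collect_le continuous_intros)
    then obtain xs xe where xs: "xs \<in> S" "\<And>y. y \<in> S \<Longrightarrow> xs \<le> y"
      and xe: "xe \<in> S" "\<And>y. y \<in> S \<Longrightarrow> y \<le> xe"
      using compact_attains_inf compact_attains_sup False by meson
    have "delay_phase r a \<tau> xs \<le> delay_phase r a \<tau> c"
    proof (rule delay_phase_antimono_inside[OF r])
      show "c \<le> xs" using xs(1) by (simp add: S_def)
      fix x assume "c < x" "x < xs"
      moreover from this have "x \<notin> S" using xs(2) by (meson not_le)
      ultimately show "\<bar>x + a\<bar> < r * exp (-\<tau>*x)" using xs(1) by (intro inside) (auto simp: S_def)
    qed
    moreover have "delay_phase r a \<tau> d \<le> delay_phase r a \<tau> xe"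
    proof (rule delay_phase_antimono_inside[OF r])
      show "xe \<le> d" using xe(1) by (simp add: S_def)
      fix x assume "xe < x" "x < d"
      moreover from this have "x \<notin> S" using xe(2) by (meson not_le)
      ultimately show "\<bar>x + a\<bar> < r * exp (-\<tau>*x)" using xe(1) by (intro inside) (auto simp: S_def)
    qed
    moreover have "delay_phase r a \<tau> xs = pi" "delay_phase r a \<tau> xe = pi"
      using xs(1) xe(1) by (auto intro!: delay_phase_eq_pi[OF r] simp: S_def)
    ultimately show ?thesis by simp
  qed
qed

lemma root_of_delay_phase:
  fixes x y r \<phi> \<tau> a :: real
  assumes r: "r > 0" and le: "\<bar>x + a\<bar> \<le> r * exp (-\<tau>*x)"
    and y: "y = sqrt ((r * exp (-\<tau>*x))\<^sup>2 - (x + a)\<^sup>2)"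
    and phase: "arccos ((x + a) / (r * exp (-\<tau>*x))) + \<tau> * y = \<phi>"
  shows "Complex x y + complex_of_real a
    - complex_of_real r * cis \<phi> * exp (- complex_of_real \<tau> * Complex x y) = 0"
proof -
  define \<rho> where "\<rho> = r * exp (-\<tau>*x)"
  define u where "u = (x + a) / \<rho>"
  have \<rho>: "\<rho> > 0" using r by (simp add: \<rho>_def)
  have u: "-1 \<le> u" "u \<le> 1" using le \<rho> by (auto simp: u_def \<rho>_def field_simps abs_le_iff)
  have cos: "\<rho> * cos (arccos u) = x + a" using u \<rho> by (simp add: u_def)
  have "\<rho> * sin (arccos u) = sqrt (\<rho>\<^sup>2 * (1 - u\<^sup>2))"
    using u \<rho> by (simp add: sin_arccos real_sqrt_mult)
  also have "\<rho>\<^sup>2 * (1 - u\<^sup>2) = \<rho>\<^sup>2 - (x + a)\<^sup>2"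
    using \<rho> by (simp add: u_def field_simps power2_eq_square)
  finally have sin: "\<rho> * sin (arccos u) = y" by (simp add: y \<rho>_def)
  have "complex_of_real r * cis \<phi> * exp (- complex_of_real \<tau> * Complex x y) = \<rho> * cis (\<phi> - \<tau>*y)"
    by (simp add: exp_eq_polar \<rho>_def cis_mult mult_ac)
  also have "\<phi> - \<tau>*y = arccos u" using phase by (simp add: u_def \<rho>_def)
  also have "\<rho> * cis (arccos u) = Complex (x + a) y"
    using cos sin by (simp add: complex_eq_iff)
  finally show ?thesis by (simp add: complex_eq_iff)
qed

lemma exists_balance_point:
  fixes r \<tau> a :: real
  assumes r: "r > 0" and t: "\<tau> > 0" and a: "a \<le> r"
  obtains x where "0 \<le> x" "x + a = r * exp (-\<tau>*x)"
proof -
  define g where "g x = x + a - r * exp (-\<tau>*x)" for x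
  have "exp (-\<tau>*(r - a)) \<le> 1" using t a by simp
  then have "0 \<le> g (r - a)" using r by (simp add: g_def mult_left_le)
  moreover have "g 0 \<le> 0" using a by (simp add: g_def)
  moreover have "continuous_on {0..r - a} g" unfolding g_def by (intro continuous_intros)
  ultimately obtain x where "0 \<le> x" "g x = 0" using IVT'[of g 0 0 "r - a"] a by auto
  then show ?thesis using that by (simp add: g_def)
qed

lemma exists_root_Re_nonneg_polar:
  fixes r \<phi> \<tau> a :: real
  assumes r: "r > 0" and t: "\<tau> > 0" and a: "a \<le> r" and \<phi>: "0 \<le> \<phi>" "\<phi> \<le> delay_phase r a \<tau> 0"
  shows "\<exists>z. Re z \<ge> 0 \<and>
    z + complex_of_real a - complex_of_real r * cis \<phi> * exp (- complex_of_real \<tau> * z) = 0"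
proof -
  obtain xm where xm: "0 \<le> xm" "xm + a = r * exp (-\<tau>*xm)"
    using exists_balance_point[OF r t a] .
  have "delay_phase r a \<tau> xm = 0"
    using xm(2) r by (simp add: delay_phase_def)
  then obtain x where x: "0 \<le> x" "x \<le> xm" "delay_phase r a \<tau> x = \<phi>"
    using IVT2'[of "delay_phase r a \<tau>" xm \<phi> 0, OF _ _ xm(1) continuous_on_delay_phase[OF r]] \<phi>
    by auto
  have "x + a - r * exp (-\<tau>*x) \<le> xm + a - r * exp (-\<tau>*xm)"
    using strict_mono_less_eq[OF strict_mono_add_minus_exp[OF r t]] x(2) by blast
  then have below: "x + a \<le> r * exp (-\<tau>*x)" using xm(2) by simp
  show ?thesis
  proof (cases "- (r * exp (-\<tau>*x)) \<le> x + a")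
    case True
    then have le: "\<bar>x + a\<bar> \<le> r * exp (-\<tau>*x)" using below by linarith
    define y where "y = sqrt ((r * exp (-\<tau>*x))\<^sup>2 - (x + a)\<^sup>2)"
    have "arccos ((x + a) / (r * exp (-\<tau>*x))) + \<tau> * y = \<phi>"
      using x(3) delay_phase_eq[OF r le] by (simp add: y_def)
    with root_of_delay_phase[OF r le y_def] x(1) show ?thesis by (intro exI[of _ "Complex x y"]) simp
  next
    case False
    \<comment> \<open>the phase reached \<open>\<phi>\<close> on its clamped branch, so \<open>\<phi> = \<pi>\<close> and there is a real root\<close>
    then have "\<phi> = pi" using x(3) delay_phase_eq_pi[OF r] by simp
    define m where "m x = x + a + r * exp (-\<tau>*x)" for x
    have "m x \<le> 0" "0 \<le> m xm" "continuous_on {x..xm} m"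
      using False xm(2) r unfolding m_def by (auto intro!: continuous_intros)
    then obtain x' where x': "x \<le> x'" "m x' = 0" using IVT'[of m x 0 xm] x(2) by auto
    have "exp (- complex_of_real \<tau> * complex_of_real x') = complex_of_real (exp (-\<tau>*x'))"
      by (simp flip: exp_of_real)
    then have "complex_of_real x' + complex_of_real a
        - complex_of_real r * cis \<phi> * exp (- complex_of_real \<tau> * complex_of_real x')
        = complex_of_real (m x')"
      using \<open>\<phi> = pi\<close> by (simp add: m_def)
    then show ?thesis using x'(2) x(1) x'(1) by (intro exI[of _ "complex_of_real x'"]) simp
  qed
qed

lemma no_root_Re_nonneg_polar:
  fixes r \<phi> \<tau> a :: real and z :: complex
  assumes r: "r > 0" and t: "\<tau> > 0" and \<phi>: "\<bar>\<phi>\<bar> \<le> pi" "delay_phase r a \<tau> 0 < \<bar>\<phi>\<bar>"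
    and z: "Re z \<ge> 0" "Im z \<ge> 0"
    and root: "z + complex_of_real a - complex_of_real r * cis \<phi> * exp (- complex_of_real \<tau> * z) = 0"
  shows False
proof -
  define x where "x = Re z"
  define y where "y = Im z"
  define \<rho> where "\<rho> = r * exp (-\<tau>*x)"
  define \<theta> where "\<theta> = \<phi> - \<tau>*y"
  have \<rho>: "\<rho> > 0" using r by (simp add: \<rho>_def)
  have "z + complex_of_real a = complex_of_real r * cis \<phi> * exp (- complex_of_real \<tau> * z)"
    using root by simp
  also have "\<dots> = \<rho> * cis \<theta>"
    by (simp add: exp_eq_polar x_def y_def \<rho>_def \<theta>_def cis_mult mult_ac flip: diff_conv_add_uminus)
  finally have polar: "z + complex_of_real a = \<rho> * cis \<theta>" .
  have cos: "x + a = \<rho> * cos \<theta>" using arg_cong[OF polar, of Re] by (simp add: x_def)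
  have sin: "y = \<rho> * sin \<theta>" using arg_cong[OF polar, of Im] by (simp add: y_def)
  have le: "\<bar>x + a\<bar> \<le> \<rho>" using cos \<rho> abs_cos_le_one[of \<theta>] by (simp add: abs_mult)
  have "\<rho>\<^sup>2 - (x + a)\<^sup>2 = y\<^sup>2"
    using cos sin by (simp add: power_mult_distrib sin_squared_eq algebra_simps)
  then have sqrt_eq: "sqrt (\<rho>\<^sup>2 - (x + a)\<^sup>2) = y" using z(2) by (simp add: y_def)
  define \<psi> where "\<psi> = arccos (cos \<theta>)"
  have "sin \<theta> \<ge> 0" using sin z(2) \<rho> by (simp add: y_def zero_le_mult_iff)
  then have "sin \<psi> = sin \<theta>" by (simp add: \<psi>_def sin_arccos sin_cos_sqrt[symmetric])
  then have "cos (\<psi> - \<theta>) = 1" by (simp add: \<psi>_def cos_diff flip: power2_eq_square)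
  then obtain n :: int where n: "\<psi> - \<theta> = n * 2 * pi" by (auto simp: cos_one_2pi_int)
  have "delay_phase r a \<tau> x = \<psi> + \<tau> * y"
    using delay_phase_eq[OF r le[unfolded \<rho>_def]] cos sqrt_eq \<rho> r by (simp add: \<rho>_def \<psi>_def)
  then have phase: "delay_phase r a \<tau> x = \<phi> + n * 2 * pi" using n by (simp add: \<theta>_def)
  have "delay_phase r a \<tau> x \<le> delay_phase r a \<tau> 0"
    using le z(1) by (intro delay_phase_antimono[OF r t]) (simp_all add: x_def \<rho>_def)
  moreover have "0 \<le> \<psi> + \<tau> * y" using z(2) t by (simp add: \<psi>_def arccos_lbound y_def)
  ultimately have bounds: "0 \<le> \<phi> + n * 2 * pi" "\<phi> + n * 2 * pi < \<bar>\<phi>\<bar>"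
    using \<phi>(2) phase \<open>delay_phase r a \<tau> x = \<psi> + \<tau> * y\<close> by linarith+
  consider "n \<ge> 1" | "n \<le> -1" | "n = 0" by linarith
  then show False
  proof cases
    case 1
    then have "n * 2 * pi \<ge> 2 * pi" by simp
    then show False using bounds \<phi>(1) by linarith
  next
    case 2
    then have "real_of_int n \<le> -1" by simp
    then have "n * 2 * pi \<le> - 2 * pi" using mult_right_mono[of _ _ "2*pi"] by fastforce
    then show False using bounds \<phi>(1) by linarith
  next
    case 3
    then show False using bounds by simp
  qed
qed

lemma root_cnj:
  fixes a \<tau> :: real and z w :: complex
  assumes "z + complex_of_real a - w * exp (- complex_of_real \<tau> * z) = 0"
  shows "cnj z + complex_of_real a - cnj w * exp (- complex_of_real \<tau> * cnj z) = 0"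
proof -
  have "cnj (z + complex_of_real a - w * exp (- complex_of_real \<tau> * z)) = 0" using assms by simp
  then show ?thesis by (simp add: exp_cnj)
qed

lemma exists_root_Re_nonneg:
  fixes a \<tau> :: real and w :: complex
  assumes w: "w \<noteq> 0" and t: "\<tau> > 0" and a: "a \<le> cmod w"
    and Arg: "\<bar>Arg w\<bar> \<le> delay_phase (cmod w) a \<tau> 0"
  shows "\<exists>z. Re z \<ge> 0 \<and> z + complex_of_real a - w * exp (- complex_of_real \<tau> * z) = 0"
proof -
  have r: "cmod w > 0" using w by simp
  have polar: "w = cmod w * cis (Arg w)" "cnj w = cmod w * cis (- Arg w)"
    using rcis_cmod_Arg[of w] rcis_cnj[of w] by (simp_all add: rcis_def)
  show ?thesis
  proof (cases "Arg w \<ge> 0")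
    case True
    then show ?thesis
      using exists_root_Re_nonneg_polar[OF r t a, of "Arg w"] Arg polar(1) by auto
  next
    case False
    then obtain z where "Re z \<ge> 0"
      "z + complex_of_real a - cnj w * exp (- complex_of_real \<tau> * z) = 0"
      using exists_root_Re_nonneg_polar[OF r t a, of "- Arg w"] Arg polar(2) by auto
    then show ?thesis using root_cnj[of z a "cnj w" \<tau>] by (intro exI[of _ "cnj z"]) simp
  qed
qed

lemma Re_root_neg:
  fixes a \<tau> :: real and w z :: complex
  assumes w: "w \<noteq> 0" and t: "\<tau> > 0" and Arg: "delay_phase (cmod w) a \<tau> 0 < \<bar>Arg w\<bar>"
    and root: "z + complex_of_real a - w * exp (- complex_of_real \<tau> * z) = 0"
  shows "Re z < 0"
proof (rule ccontr)
  assume "\<not> Re z < 0"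
  then have Re: "Re z \<ge> 0" "Re (cnj z) \<ge> 0" by simp_all
  have r: "cmod w > 0" using w by simp
  have bound: "\<bar>Arg w\<bar> \<le> pi" "\<bar>- Arg w\<bar> \<le> pi" using Arg_bounded[of w] by auto
  have polar: "w = cmod w * cis (Arg w)" "cnj w = cmod w * cis (- Arg w)"
    using rcis_cmod_Arg[of w] rcis_cnj[of w] by (simp_all add: rcis_def)
  show False
  proof (cases "Im z \<ge> 0")
    case True
    with no_root_Re_nonneg_polar[OF r t bound(1) Arg Re(1)] root polar(1) show False by metis
  next
    case False
    then have "Im (cnj z) \<ge> 0" by simp
    with no_root_Re_nonneg_polar[OF r t bound(2) _ Re(2)] Arg root_cnj[OF root] polar(2)
    show False by simp
  qed
qed

lemma delay_phase_0_inside: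
  assumes "-r < a" "a < r"
  shows "delay_phase r a \<tau> 0 = arccos (a/r) + \<tau> * sqrt (r\<^sup>2 - a\<^sup>2)"
proof -
  have "r > 0" "-1 < a/r" "a/r < 1" using assms by (auto simp: field_simps)
  moreover have "\<bar>a\<bar> < r" using assms by linarith
  then have "a\<^sup>2 < r\<^sup>2" using power_strict_mono[of "\<bar>a\<bar>" r 2] by simp
  ultimately show ?thesis by (simp add: delay_phase_def)
qed

lemma mem_stab_delays:
  "\<tau> \<in> stab_delays (complex_of_real a) w \<longleftrightarrow>
     \<tau> > 0 \<and> (\<forall>z. z + complex_of_real a - w * exp (- complex_of_real \<tau> * z) = 0 \<longrightarrow> Re z < 0)"
  by (simp add: stab_delays_def)

lemma stab_delays_eq_empty:
  fixes a :: real
  assumes "a \<le> Re w"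
  shows "stab_delays (complex_of_real a) w = {}"
proof -
  have "\<exists>z. Re z \<ge> 0 \<and> z + complex_of_real a - w * exp (- complex_of_real \<tau> * z) = 0"
    if t: "\<tau> > 0" for \<tau>
  proof (cases "w = 0")
    case True
    then show ?thesis using assms by (intro exI[of _ "- complex_of_real a"]) simp
  next
    case False
    have "a / cmod w \<le> cos \<bar>Arg w\<bar>"
      using cos_Arg[OF False] assms by (simp add: divide_right_mono)
    then have clamp: "max (-1) (min 1 (a / cmod w)) \<le> cos \<bar>Arg w\<bar>"
      using cos_ge_minus_one[of "\<bar>Arg w\<bar>"] by (auto simp: max_def min_def)
    have "\<bar>Arg w\<bar> = arccos (cos \<bar>Arg w\<bar>)"
      by (rule arccos_cos[symmetric]) (use Arg_bounded[of w] in auto)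
    also have "\<dots> \<le> arccos (max (-1) (min 1 (a / cmod w)))"
      by (rule arccos_le_arccos[OF _ clamp cos_le_one]) simp
    finally have "\<bar>Arg w\<bar> \<le> arccos (max (-1) (min 1 (a / cmod w)))" .
    moreover have "0 \<le> \<tau> * sqrt (max 0 ((cmod w)\<^sup>2 - a\<^sup>2))" using t by simp
    ultimately have "\<bar>Arg w\<bar> \<le> delay_phase (cmod w) a \<tau> 0"
      using False by (simp add: delay_phase_0)
    moreover have "a \<le> cmod w" using assms complex_Re_le_cmod[of w] by linarith
    ultimately show ?thesis using exists_root_Re_nonneg[OF False t] by blast
  qed
  then show ?thesis by (force simp: mem_stab_delays)
qed

text \<open>No delay-dependent argument is needed here: for \<open>Re z \<ge> 0\<close> the modulus of the
  right-hand side is at most \<open>\<bar>w\<bar> \<le> a \<le> \<bar>z + a\<bar>\<close>, forcing \<open>z = 0\<close> and \<open>w = a\<close>.\<close>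
lemma stab_delays_eq_all:
  fixes a :: real
  assumes "cmod w \<le> a" "Re w < a"
  shows "stab_delays (complex_of_real a) w = {0<..}"
proof -
  have "Re z < 0" if t: "\<tau> > 0" and root: "z + complex_of_real a - w * exp (- complex_of_real \<tau> * z) = 0"
    for \<tau> z
  proof (rule ccontr)
    assume "\<not> Re z < 0"
    then have Re: "Re z \<ge> 0" by simp
    have eq: "z + complex_of_real a = w * exp (- complex_of_real \<tau> * z)" using root by simp
    then have "cmod (z + complex_of_real a) = cmod w * exp (- \<tau> * Re z)" by (simp add: norm_mult)
    also have "\<dots> \<le> cmod w" using Re t by (simp add: mult_left_le)
    finally have "cmod (z + complex_of_real a) \<le> cmod w" .
    moreover have "Re z + a \<le> cmod (z + complex_of_real a)"
      using complex_Re_le_cmod[of "z + complex_of_real a"] by simp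
    ultimately have "Re z = 0" "cmod (z + complex_of_real a) = a" using assms(1) Re by linarith+
    moreover have "(cmod (z + complex_of_real a))\<^sup>2 = (Re z + a)\<^sup>2 + (Im z)\<^sup>2"
      by (simp add: cmod_power2)
    ultimately have "z = 0" by (simp add: complex_eq_iff)
    then show False using eq assms(2) by auto
  qed
  then show ?thesis by (auto simp: mem_stab_delays)
qed

lemma arccos_less_abs_Arg:
  assumes "Re w < a" "a < cmod w"
  shows "arccos (a / cmod w) < \<bar>Arg w\<bar>"
proof -
  have w: "w \<noteq> 0" using assms complex_Re_le_cmod[of w] by auto
  have "-1 < a / cmod w" "a / cmod w < 1"
    using assms abs_Re_le_cmod[of w] w by (auto simp: field_simps abs_le_iff)
  moreover have "cos \<bar>Arg w\<bar> < a / cmod w"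
    using cos_Arg[OF w] assms(1) w by (simp add: divide_strict_right_mono)
  ultimately have "cos \<bar>Arg w\<bar> < cos (arccos (a / cmod w))" by simp
  then show ?thesis
    using Arg_bounded[of w] cos_mono_less_eq[of "\<bar>Arg w\<bar>" "arccos (a / cmod w)"]
      arccos_lbound[of "a / cmod w"] arccos_ubound[of "a / cmod w"] \<open>-1 < a / cmod w\<close> \<open>a / cmod w < 1\<close>
    by auto
qed

lemma stab_delays_eq_interval:
  fixes a :: real
  assumes "Re w < a" "a < cmod w"
  shows "stab_delays (complex_of_real a) w =
    {0<..< (1 / sqrt ((cmod w)\<^sup>2 - a\<^sup>2)) * (\<bar>Arg w\<bar> - arccos (a / cmod w))}"
proof -
  have w: "w \<noteq> 0" using assms complex_Re_le_cmod[of w] by auto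
  have "- cmod w < a" using assms abs_Re_le_cmod[of w] by (simp add: abs_le_iff)
  then have "0 < (cmod w)\<^sup>2 - a\<^sup>2" "delay_phase (cmod w) a \<tau> 0
      = arccos (a / cmod w) + \<tau> * sqrt ((cmod w)\<^sup>2 - a\<^sup>2)" for \<tau>
    using assms delay_phase_0_inside[of "cmod w" a \<tau>] power_strict_mono[of "\<bar>a\<bar>" "cmod w" 2]
    by auto
  then have stable_iff: "delay_phase (cmod w) a \<tau> 0 < \<bar>Arg w\<bar> \<longleftrightarrow>
      \<tau> < (1 / sqrt ((cmod w)\<^sup>2 - a\<^sup>2)) * (\<bar>Arg w\<bar> - arccos (a / cmod w))" for \<tau>
    by (simp add: field_simps)
  have "\<tau> \<in> stab_delays (complex_of_real a) w \<longleftrightarrow> \<tau> > 0 \<and> delay_phase (cmod w) a \<tau> 0 < \<bar>Arg w\<bar>"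
    for \<tau>
  proof
    assume "\<tau> \<in> stab_delays (complex_of_real a) w"
    then show "\<tau> > 0 \<and> delay_phase (cmod w) a \<tau> 0 < \<bar>Arg w\<bar>"
      using exists_root_Re_nonneg[OF w _ less_imp_le[OF assms(2)], of \<tau>]
      by (metis mem_stab_delays not_less)
  qed (use Re_root_neg[OF w] in \<open>auto simp: mem_stab_delays\<close>)
  then show ?thesis by (simp add: set_eq_iff stable_iff)
qed

lemma arccos_eq_cot:
  fixes y c :: real
  assumes "0 < y" "y < pi" "cot y = c"
  shows "y = arccos (c / sqrt (1 + c\<^sup>2))"
proof -
  have sin: "sin y > 0" using assms sin_gt_zero by blast
  have cos: "cos y = c * sin y" using assms(3) sin by (simp add: cot_def field_simps)
  have "(sin y * sqrt (1 + c\<^sup>2))\<^sup>2 = 1"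
    using sin_cos_squared_add[of y] cos by (simp add: power_mult_distrib algebra_simps)
  moreover have "sin y * sqrt (1 + c\<^sup>2) \<ge> 0" using sin by simp
  ultimately have "sin y * sqrt (1 + c\<^sup>2) = 1" unfolding power2_eq_1_iff by linarith
  moreover have "sqrt (1 + c\<^sup>2) > 0" by (simp add: add_pos_nonneg)
  ultimately have "cos y = c / sqrt (1 + c\<^sup>2)" using cos by (simp add: field_simps)
  then show ?thesis using assms arccos_cos[of y] by simp
qed

lemma arccot_eq_arccos:
  fixes a r :: real
  assumes "-r < a" "a < r"
  shows "arccot (a / sqrt (r\<^sup>2 - a\<^sup>2)) = arccos (a / r)"
proof -
  define \<alpha> where "\<alpha> = arccos (a / r)"
  have r: "r > 0" and u: "-1 < a / r" "a / r < 1" using assms by (auto simp: field_simps)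
  have "\<bar>a\<bar> < r" using assms by linarith
  then have r2: "0 < r\<^sup>2 - a\<^sup>2" using power_strict_mono[of "\<bar>a\<bar>" r 2] by simp
  have \<alpha>: "0 < \<alpha>" "\<alpha> < pi" using arccos_lt_bounded[OF u] by (auto simp: \<alpha>_def)
  have "sin \<alpha> = sqrt ((sqrt (r\<^sup>2 - a\<^sup>2) / r)\<^sup>2)"
    using u r r2 by (simp add: \<alpha>_def sin_arccos field_simps power_divide)
  then have "sin \<alpha> = sqrt (r\<^sup>2 - a\<^sup>2) / r" using r r2 by simp
  moreover have "cos \<alpha> = a / r" using u by (simp add: \<alpha>_def)
  ultimately have cot: "cot \<alpha> = a / sqrt (r\<^sup>2 - a\<^sup>2)" using r by (simp add: cot_def)
  show ?thesis unfolding arccot_def \<alpha>_def[symmetric]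
  proof (rule the_equality)
    fix y assume "0 < y \<and> y < pi \<and> cot y = a / sqrt (r\<^sup>2 - a\<^sup>2)"
    then show "y = \<alpha>" using arccos_eq_cot[of y] arccos_eq_cot[OF \<alpha> cot] by auto
  qed (use \<alpha> cot in simp)
qed

lemma critical_delay_pos:
  assumes "Re w < a" "a < cmod w"
  shows "0 < (1 / sqrt ((cmod w)\<^sup>2 - a\<^sup>2)) * (\<bar>Arg w\<bar> - arccos (a / cmod w))"
proof -
  have "\<bar>a\<bar> < cmod w" using assms abs_Re_le_cmod[of w] by linarith
  then have "a\<^sup>2 < (cmod w)\<^sup>2" using power_strict_mono[of "\<bar>a\<bar>" "cmod w" 2] by simp
  then show ?thesis using arccos_less_abs_Arg[OF assms] by simp
qed

theorem mainTheorem1: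
  fixes a :: real and w :: complex
  defines "T \<equiv> stab_delays (complex_of_real a) w"
  defines "\<tau>c \<equiv> (1 / sqrt ((cmod w)\<^sup>2 - a\<^sup>2)) * (\<bar>Arg w\<bar> - arccos (a / cmod w))"
  shows "(T = {0<..} \<longleftrightarrow> a \<ge> cmod w \<and> a > Re w)
    \<and> ((T \<noteq> {} \<and> T \<subset> {0<..}) \<longleftrightarrow> w \<noteq> 0 \<and> Re w < a \<and> a < cmod w)
    \<and> (w \<noteq> 0 \<and> Re w < a \<and> a < cmod w \<longrightarrow>
         T = {0<..<\<tau>c}
         \<and> \<tau>c = (1 / sqrt ((cmod w)\<^sup>2 - a\<^sup>2)) *
                (\<bar>Arg w\<bar> - arccot (a / sqrt ((cmod w)\<^sup>2 - a\<^sup>2)))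
         \<and> \<tau>c > 0)
    \<and> (T = {} \<longleftrightarrow> a \<le> Re w)"
proof -
  have "(1::real) \<in> {0<..}" by simp
  then have nonempty: "{0<..} \<noteq> ({}::real set)" "({}::real set) \<noteq> {0<..}" by blast+
  consider (unstable) "a \<le> Re w" | (critical) "Re w < a" "a < cmod w" | (stable) "cmod w \<le> a" "Re w < a"
    by linarith
  then show ?thesis
  proof cases
    case unstable
    then show ?thesis using stab_delays_eq_empty[OF unstable] nonempty by (auto simp: T_def)
  next
    case critical
    have "w \<noteq> 0" "- cmod w < a" using critical abs_Re_le_cmod[of w] by auto
    have T: "T = {0<..<\<tau>c}" and pos: "0 < \<tau>c"
      using stab_delays_eq_interval[OF critical] critical_delay_pos[OF critical]
      by (simp_all add: T_def \<tau>c_def)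
    then have "\<tau>c / 2 \<in> T" "\<tau>c \<notin> T" "T \<subseteq> {0<..}" by auto
    then have "T \<noteq> {}" "T \<subset> {0<..}" using pos by auto
    moreover have "\<tau>c = (1 / sqrt ((cmod w)\<^sup>2 - a\<^sup>2)) *
        (\<bar>Arg w\<bar> - arccot (a / sqrt ((cmod w)\<^sup>2 - a\<^sup>2)))"
      using arccot_eq_arccos[OF \<open>- cmod w < a\<close> critical(2)] by (simp add: \<tau>c_def)
    moreover have "\<not> a \<le> Re w" "\<not> cmod w \<le> a" using critical by auto
    ultimately show ?thesis using \<open>w \<noteq> 0\<close> critical T pos by blast
  next
    case stable
    then show ?thesis using stab_delays_eq_all[OF stable] nonempty by (auto simp: T_def)
  qed
qed

end
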